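(* For a binary word $\mathrm x$ of length $m$ and $n\geq0$ let $\widetilde P_{\bar T^{-n}[\![\mathrm x]\!]}=P_{\bar T^{-n}[\![\mathrm x]\!]}\oplus P'_{[\![1]\!]}P_{\bar T^{-n}[\![\mathrm x]\!]}$, an operator on $\widetilde{\mathcal H}$. Then for all $n,m$ with $n+m<\Bbbk-1$, $$\widetilde U_\theta^*\,\widetilde P_{\bar T^{-n}[\![\mathrm x]\!]}\,\widetilde U_\theta=\widetilde P_{\bar T^{-n-1}[\![\mathrm x]\!]}.$$
   Context: Let $\Bbbk\geq3$ and $\mathcal H=(\mathbb C^2)^{\otimes\Bbbk}$ with orthonormal basis $|\mathrm y\rangle=|\mathrm y_1\rangle\otimes\cdots\otimes|\mathrm y_\Bbbk\rangle$, $\mathrm y_i\in\{0,1\}$. For a binary word $\mathrm w=\mathrm w_1\dots\mathrm w_m$ ($m\leq\Bbbk$), $P_{[\![\mathrm w]\!]}$ is the orthogonal projection onto the span of the $|\mathrm y\rangle$ with $\mathrm y_1\dots\mathrm y_m=\mathrm w$; $[\![\mathrm w]\!]\subset[0,1]$ is the dyadic cylinder of points whose first $m$ binary digits are $\mathrm w$. $\bar T(x)=2x\bmod1$, so $\bar T^{-n}[\![\mathrm w]\!]=\bigcup_{|\mathrm y|=n}[\![\mathrm y\mathrm w]\!]$, and $P_{\bar T^{-n}[\![\mathrm w]\!]}=\sum_{|\mathrm y|=n}P_{[\![\mathrm y\mathrm w]\!]}$. Let $\mathbf U$ be a $2\times2$ unitary with all entries of modulus $2^{-1/2}$, $\bar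 U|\mathrm y\rangle=|\mathrm y_2\rangle\otimes\cdots\otimes|\mathrm y_\Bbbk\rangle\otimes\mathbf U|\mathrm y_1\rangle$, $\sigma$ the unitary exchanging the last two tensor factors, and $P'_{[\![j]\!]}=\bar UP_{[\![j]\!]}\bar U^*$ for $j\in\{0,1\}$. Tower space $\widetilde{\mathcal H}=\mathcal H\oplus P'_{[\![1]\!]}\mathcal H$ with the direct-sum scalar product, and $\widetilde U_\theta(\phi_0,\phi_1)=\big(\sigma\bar UP'_{[\![1]\!]}\phi_1+\bar UP_{[\![0]\!]}\phi_0,\ e^{i\theta}\bar UP_{[\![1]\!]}\phi_0\big)$, $\theta\in\mathbb R$. *)

theory Defs
  imports Complex_Main
begin

(* Binary digits are bool (False = 0, True = 1); basis vectors |y> of H are indexed by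
   words y :: bool list of length k.  A vector of H is its coefficient function,
   required to vanish off words of length k. *)

definition Hsp :: "nat \<Rightarrow> (bool list \<Rightarrow> complex) set" where
  "Hsp k = {\<phi>. \<forall>y. length y \<noteq> k \<longrightarrow> \<phi> y = 0}"

definition ip :: "nat \<Rightarrow> (bool list \<Rightarrow> complex) \<Rightarrow> (bool list \<Rightarrow> complex) \<Rightarrow> complex" where
  "ip k \<phi> \<psi> = (\<Sum>y\<in>{y. length y = k}. cnj (\<phi> y) * \<psi> y)"

(* linear operator given on the basis: f y z = coefficient of |z> in the image of |y> *)
definition basis_op :: "nat \<Rightarrow> (bool list \<Rightarrow> bool list \<Rightarrow> complex)
    \<Rightarrow> (bool list \<Rightarrow> complex) \<Rightarrow> bool list \<Rightarrow> complex" where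
  "basis_op k f \<phi> = (\<lambda>z. \<Sum>y\<in>{y. length y = k}. \<phi> y * f y z)"

definition cyl_proj :: "bool list \<Rightarrow> (bool list \<Rightarrow> complex) \<Rightarrow> bool list \<Rightarrow> complex" where
  "cyl_proj w \<phi> = (\<lambda>z. if take (length w) z = w then \<phi> z else 0)"

(* P_{T^{-n}[[x]]} = sum over words y of length n of P_[[y x]] *)
definition preimg_proj :: "nat \<Rightarrow> bool list \<Rightarrow> (bool list \<Rightarrow> complex) \<Rightarrow> bool list \<Rightarrow> complex" where
  "preimg_proj n x \<phi> = (\<lambda>z. \<Sum>y\<in>{y::bool list. length y = n}. cyl_proj (y @ x) \<phi> z)"

(* U i j = <i| U |j>;  Ubar |y> = |y_2 ... y_k> (x) U |y_1> *)
definition Ubar :: "nat \<Rightarrow> (bool \<Rightarrow> bool \<Rightarrow> complex) \<Rightarrow> (bool list \<Rightarrow> complex) \<Rightarrow> bool list \<Rightarrow> complex" where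
  "Ubar k U = basis_op k (\<lambda>y z. if length z = k \<and> butlast z = tl y then U (last z) (hd y) else 0)"

definition swap_last2 :: "nat \<Rightarrow> (bool list \<Rightarrow> complex) \<Rightarrow> bool list \<Rightarrow> complex" where
  "swap_last2 k = basis_op k (\<lambda>y z. if z = take (k - 2) y @ [y ! (k - 1), y ! (k - 2)] then 1 else 0)"

definition adjH :: "nat \<Rightarrow> ((bool list \<Rightarrow> complex) \<Rightarrow> bool list \<Rightarrow> complex)
    \<Rightarrow> (bool list \<Rightarrow> complex) \<Rightarrow> bool list \<Rightarrow> complex" where
  "adjH k A = (\<lambda>\<psi>. THE \<chi>. \<chi> \<in> Hsp k \<and> (\<forall>\<phi>\<in>Hsp k. ip k (A \<phi>) \<psi> = ip k \<phi> \<chi>))"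

definition Pprime :: "nat \<Rightarrow> (bool \<Rightarrow> bool \<Rightarrow> complex) \<Rightarrow> bool
    \<Rightarrow> (bool list \<Rightarrow> complex) \<Rightarrow> bool list \<Rightarrow> complex" where
  "Pprime k U b = (\<lambda>\<phi>. Ubar k U (cyl_proj [b] (adjH k (Ubar k U) \<phi>)))"

type_synonym tvec = "(bool list \<Rightarrow> complex) \<times> (bool list \<Rightarrow> complex)"

definition Htil :: "nat \<Rightarrow> (bool \<Rightarrow> bool \<Rightarrow> complex) \<Rightarrow> tvec set" where
  "Htil k U = {(\<phi>0, \<phi>1). \<phi>0 \<in> Hsp k \<and> \<phi>1 \<in> Pprime k U True ` Hsp k}"

definition ipT :: "nat \<Rightarrow> tvec \<Rightarrow> tvec \<Rightarrow> complex" where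
  "ipT k v w = ip k (fst v) (fst w) + ip k (snd v) (snd w)"

definition adjT :: "nat \<Rightarrow> (bool \<Rightarrow> bool \<Rightarrow> complex) \<Rightarrow> (tvec \<Rightarrow> tvec) \<Rightarrow> tvec \<Rightarrow> tvec" where
  "adjT k U A = (\<lambda>\<psi>. THE \<chi>. \<chi> \<in> Htil k U \<and> (\<forall>\<phi>\<in>Htil k U. ipT k (A \<phi>) \<psi> = ipT k \<phi> \<chi>))"

definition Util :: "nat \<Rightarrow> (bool \<Rightarrow> bool \<Rightarrow> complex) \<Rightarrow> real \<Rightarrow> tvec \<Rightarrow> tvec" where
  "Util k U \<theta> = (\<lambda>(\<phi>0, \<phi>1).
     (\<lambda>z. swap_last2 k (Ubar k U (Pprime k U True \<phi>1)) z + Ubar k U (cyl_proj [False] \<phi>0) z,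
      \<lambda>z. exp (\<i> * complex_of_real \<theta>) * Ubar k U (cyl_proj [True] \<phi>0) z))"

definition Ptil :: "nat \<Rightarrow> (bool \<Rightarrow> bool \<Rightarrow> complex) \<Rightarrow> nat \<Rightarrow> bool list \<Rightarrow> tvec \<Rightarrow> tvec" where
  "Ptil k U n x = (\<lambda>(\<phi>0, \<phi>1). (preimg_proj n x \<phi>0, Pprime k U True (preimg_proj n x \<phi>1)))"

end

theory Submission
  imports Defs
begin

text \<open>
  The adjoint of \<open>Ubar\<close> is explicit: it moves the last letter to the front and applies
  \<open>U\<^sup>*\<close> to it.  This gives a closed formula \<open>Util_adj\<close> for the adjoint of \<open>Util\<close>, after
  which the claim is a direct calculation.  Since \<open>Ubar\<close> shifts words one letter to the
  left, \<open>preimg_proj n x \<circ> Ubar = Ubar \<circ> preimg_proj (Suc n) x\<close>, and \<open>preimg_proj n x\<close>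
  commutes with \<open>swap_last2\<close> and \<open>Pprime\<close> as long as \<open>x\<close> ends before the last two letters.
  The cross terms vanish because \<open>Ubar\<^sup>* \<sigma> Ubar Ubar\<close> and \<open>Ubar\<^sup>* Ubar\<^sup>* \<sigma> Ubar\<close> preserve the
  first letter, so they cannot map the range of \<open>P\<^bsub>[1]\<^esub>\<close> into that of \<open>P\<^bsub>[0]\<^esub>\<close> or conversely.
\<close>

lemma finite_words: "finite {y::bool list. length y = m}"
  using finite_lists_length_eq[of "UNIV::bool set" m] by simp

lemma sum_words_Suc_Cons:
  "(\<Sum>y\<in>{y::bool list. length y = Suc m}. f y) = (\<Sum>w\<in>{w::bool list. length w = m}. f (False # w) + f (True # w))"
proof -
  let ?W = "{w::bool list. length w = m}"
  have words: "{y::bool list. length y = Suc m} = Cons False ` ?W \<union> Cons True ` ?W"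
    by (auto simp: length_Suc_conv image_iff)
  have "(\<Sum>y\<in>{y::bool list. length y = Suc m}. f y) = sum f (Cons False ` ?W) + sum f (Cons True ` ?W)"
    unfolding words by (rule sum.union_disjoint) (auto simp: finite_words)
  then show ?thesis by (simp add: sum.reindex sum.distrib)
qed

lemma sum_words_Suc_snoc:
  "(\<Sum>y\<in>{y::bool list. length y = Suc m}. f y) = (\<Sum>w\<in>{w::bool list. length w = m}. f (w @ [False]) + f (w @ [True]))"
proof -
  have "bij_betw rev {y::bool list. length y = l} {y. length y = l}" for l
    by (rule bij_betw_byWitness[of _ rev]) auto
  then have reindex: "(\<Sum>y\<in>{y::bool list. length y = l}. g y) = (\<Sum>y\<in>{y. length y = l}. g (rev y))" for g l
    using sum.reindex_bij_betw by metis
  show ?thesis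
    by (subst (1 2) reindex) (simp add: sum_words_Suc_Cons)
qed

lemma obtain_snoc2:
  assumes "2 \<le> length z"
  obtains v c d where "z = v @ [c, d]"
proof -
  obtain z' d where z: "z = z' @ [d]" using assms by (cases z rule: rev_cases) auto
  moreover obtain v c where "z' = v @ [c]" using assms z by (cases z' rule: rev_cases) auto
  ultimately show ?thesis using that by simp
qed

definition Ubar_adj :: "nat \<Rightarrow> (bool \<Rightarrow> bool \<Rightarrow> complex) \<Rightarrow> (bool list \<Rightarrow> complex) \<Rightarrow> bool list \<Rightarrow> complex" where
  "Ubar_adj k U \<psi> = (\<lambda>y. if length y = k
     then cnj (U False (hd y)) * \<psi> (tl y @ [False]) + cnj (U True (hd y)) * \<psi> (tl y @ [True]) else 0)"

lemma Ubar_apply: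
  assumes "length z = k" "0 < k"
  shows "Ubar k U \<phi> z = \<phi> (False # butlast z) * U (last z) False + \<phi> (True # butlast z) * U (last z) True"
proof -
  obtain m where k: "k = Suc m" using assms(2) by (cases k) auto
  have "Ubar k U \<phi> z = (\<Sum>w\<in>{w::bool list. length w = m}.
          if w = butlast z then \<phi> (False # w) * U (last z) False + \<phi> (True # w) * U (last z) True else 0)"
    unfolding Ubar_def basis_op_def k sum_words_Suc_Cons using assms(1) k by (intro sum.cong) auto
  also have "\<dots> = \<phi> (False # butlast z) * U (last z) False + \<phi> (True # butlast z) * U (last z) True"
    using assms k by (simp add: finite_words)
  finally show ?thesis .
qed

lemma Ubar_outside: "length z \<noteq> k \<Longrightarrow> Ubar k U \<phi> z = 0"
  unfolding Ubar_def basis_op_def by simp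

lemma swap_last2_apply:
  assumes "length u + 2 = k"
  shows "swap_last2 k \<psi> (u @ [a, b]) = \<psi> (u @ [b, a])"
proof -
  have "(u @ [a, b] = take (k - 2) y @ [y ! (k - 1), y ! (k - 2)]) \<longleftrightarrow> y = u @ [b, a]"
    if "length y = k" for y
  proof -
    have "2 \<le> length y" using that assms by simp
    then obtain v c d where "y = v @ [c, d]" by (rule obtain_snoc2)
    then show ?thesis using that assms by (auto simp: nth_append)
  qed
  then have "swap_last2 k \<psi> (u @ [a, b]) = (\<Sum>y\<in>{y::bool list. length y = k}. if y = u @ [b, a] then \<psi> y else 0)"
    unfolding swap_last2_def basis_op_def by (intro sum.cong) auto
  also have "\<dots> = \<psi> (u @ [b, a])" using assms by (simp add: finite_words)
  finally show ?thesis .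
qed

lemma swap_last2_outside: "2 \<le> k \<Longrightarrow> length z \<noteq> k \<Longrightarrow> swap_last2 k \<psi> z = 0"
  unfolding swap_last2_def basis_op_def by (intro sum.neutral) auto

lemma preimg_proj_apply:
  "preimg_proj n x \<phi> z = (if n + length x \<le> length z \<and> take (length x) (drop n z) = x then \<phi> z else 0)"
proof -
  have "(take (n + length x) z = y @ x) \<longleftrightarrow>
      (y = take n z \<and> n + length x \<le> length z \<and> take (length x) (drop n z) = x)"
    if "length y = n" for y
  proof (cases "n + length x \<le> length z")
    case True
    then show ?thesis using that by (auto simp: take_add append_eq_append_conv)
  next
    case False
    then have "length (take (n + length x) z) \<noteq> length (y @ x)" using that by simp
    then show ?thesis using False by auto
  qed
  then have "preimg_proj n x \<phi> z = (\<Sum>y\<in>{y::bool list. length y = n}.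
      if y = take n z then (if n + length x \<le> length z \<and> take (length x) (drop n z) = x then \<phi> z else 0) else 0)"
    unfolding preimg_proj_def cyl_proj_def by (intro sum.cong) auto
  also have "\<dots> = (if n + length x \<le> length z \<and> take (length x) (drop n z) = x then \<phi> z else 0)"
    by (simp add: finite_words)
  finally show ?thesis .
qed

lemma ip_add_left: "ip k (\<lambda>z. a z + b z) c = ip k a c + ip k b c"
  unfolding ip_def by (simp add: sum.distrib distrib_right)

lemma ip_add_right: "ip k c (\<lambda>z. a z + b z) = ip k c a + ip k c b"
  unfolding ip_def by (simp add: sum.distrib distrib_left)

lemma ip_scale_left: "ip k (\<lambda>z. s * a z) c = cnj s * ip k a c"
  unfolding ip_def by (simp add: sum_distrib_left mult.assoc)

lemma ip_scale_right: "ip k c (\<lambda>z. s * a z) = s * ip k c a"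
  unfolding ip_def by (simp add: sum_distrib_left algebra_simps)

lemma ip_zero_left: "ip k (\<lambda>_. 0) c = 0"
  unfolding ip_def by simp

lemma ip_cnj: "ip k a b = cnj (ip k b a)"
  unfolding ip_def by (simp add: mult.commute)

lemma ip_basis_left:
  assumes "length z = k"
  shows "ip k (\<lambda>w. if w = z then 1 else 0) c = c z"
proof -
  have "ip k (\<lambda>w. if w = z then 1 else 0) c = (\<Sum>w\<in>{w::bool list. length w = k}. if w = z then c w else 0)"
    unfolding ip_def by (intro sum.cong) auto
  also have "\<dots> = c z" using assms by (simp add: finite_words)
  finally show ?thesis .
qed

lemma basis_vector_in_Hsp: "length z = k \<Longrightarrow> (\<lambda>w. if w = z then 1 else 0) \<in> Hsp k"
  unfolding Hsp_def by auto

lemma Hsp_eqI: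
  assumes "a \<in> Hsp k" "b \<in> Hsp k" "\<And>\<phi>. \<phi> \<in> Hsp k \<Longrightarrow> ip k \<phi> a = ip k \<phi> b"
  shows "a = b"
proof
  fix z show "a z = b z"
  proof (cases "length z = k")
    case True
    then show ?thesis using assms(3) ip_basis_left basis_vector_in_Hsp by metis
  next
    case False
    then show ?thesis using assms(1,2) unfolding Hsp_def by simp
  qed
qed

lemma ip_cyl_proj: "ip k (cyl_proj w a) b = ip k a (cyl_proj w b)"
  unfolding ip_def cyl_proj_def by (intro sum.cong) auto

lemma ip_Ubar:
  assumes "0 < k"
  shows "ip k (Ubar k U a) b = ip k a (Ubar_adj k U b)"
proof -
  obtain m where k: "k = Suc m" using assms by (cases k) auto
  have "ip k (Ubar k U a) b = (\<Sum>w\<in>{w::bool list. length w = m}.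
      cnj (Ubar k U a (w @ [False])) * b (w @ [False]) + cnj (Ubar k U a (w @ [True])) * b (w @ [True]))"
    unfolding k ip_def sum_words_Suc_snoc ..
  also have "\<dots> = (\<Sum>w\<in>{w::bool list. length w = m}.
      cnj (a (False # w)) * Ubar_adj k U b (False # w) + cnj (a (True # w)) * Ubar_adj k U b (True # w))"
    by (intro sum.cong) (simp_all add: k Ubar_apply Ubar_adj_def algebra_simps)
  also have "\<dots> = ip k a (Ubar_adj k U b)"
    unfolding k ip_def sum_words_Suc_Cons ..
  finally show ?thesis .
qed

lemma ip_Ubar_adj: "0 < k \<Longrightarrow> ip k (Ubar_adj k U a) b = ip k a (Ubar k U b)"
  by (metis ip_cnj ip_Ubar)

lemma ip_swap_last2:
  assumes "2 \<le> k"
  shows "ip k (swap_last2 k a) b = ip k a (swap_last2 k b)"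
proof -
  obtain j where k: "k = Suc (Suc j)" using assms by (metis add_2_eq_Suc le_Suc_ex)
  show ?thesis
    unfolding ip_def k sum_words_Suc_snoc[where m = "Suc j"] sum_words_Suc_snoc[where m = j]
    by (intro sum.cong) (simp_all add: swap_last2_apply algebra_simps)
qed

lemma Ubar_in_Hsp: "Ubar k U a \<in> Hsp k"
  unfolding Hsp_def by (simp add: Ubar_outside)

lemma Ubar_adj_in_Hsp: "Ubar_adj k U a \<in> Hsp k"
  unfolding Hsp_def Ubar_adj_def by simp

lemma cyl_proj_in_Hsp: "a \<in> Hsp k \<Longrightarrow> cyl_proj w a \<in> Hsp k"
  unfolding Hsp_def cyl_proj_def by simp

lemma preimg_proj_in_Hsp: "a \<in> Hsp k \<Longrightarrow> preimg_proj n x a \<in> Hsp k"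
  unfolding Hsp_def preimg_proj_apply by simp

lemma adjH_Ubar:
  assumes "0 < k"
  shows "adjH k (Ubar k U) \<psi> = Ubar_adj k U \<psi>"
  unfolding adjH_def
proof (rule the_equality)
  show "Ubar_adj k U \<psi> \<in> Hsp k \<and> (\<forall>\<phi>\<in>Hsp k. ip k (Ubar k U \<phi>) \<psi> = ip k \<phi> (Ubar_adj k U \<psi>))"
    using ip_Ubar[OF assms] Ubar_adj_in_Hsp by blast
  fix \<chi> assume "\<chi> \<in> Hsp k \<and> (\<forall>\<phi>\<in>Hsp k. ip k (Ubar k U \<phi>) \<psi> = ip k \<phi> \<chi>)"
  then show "\<chi> = Ubar_adj k U \<psi>"
    by (intro Hsp_eqI) (auto simp: Ubar_adj_in_Hsp ip_Ubar[OF assms])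
qed

lemma Pprime_conv: "0 < k \<Longrightarrow> Pprime k U b \<phi> = Ubar k U (cyl_proj [b] (Ubar_adj k U \<phi>))"
  unfolding Pprime_def by (simp add: adjH_Ubar)

definition orthonormal_columns :: "(bool \<Rightarrow> bool \<Rightarrow> complex) \<Rightarrow> bool" where
  "orthonormal_columns U \<longleftrightarrow>
     (\<forall>i l. cnj (U False i) * U False l + cnj (U True i) * U True l = (if i = l then 1 else 0))"

lemma orthonormal_columns_adj_mult:
  assumes "orthonormal_columns U"
  shows "cnj (U False h) * (U False False * p + U False True * q)
       + cnj (U True h) * (U True False * p + U True True * q) = (if h then q else p)"
proof -
  have "cnj (U False h) * (U False False * p + U False True * q)
       + cnj (U True h) * (U True False * p + U True True * q)
     = (cnj (U False h) * U False False + cnj (U True h) * U True False) * p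
       + (cnj (U False h) * U False True + cnj (U True h) * U True True) * q"
    by (simp add: algebra_simps)
  then show ?thesis using assms unfolding orthonormal_columns_def by (cases h) simp_all
qed

lemma Ubar_adj_Ubar:
  assumes "orthonormal_columns U" "0 < k" "d \<in> Hsp k"
  shows "Ubar_adj k U (Ubar k U d) = d"
proof
  fix y show "Ubar_adj k U (Ubar k U d) y = d y"
  proof (cases "length y = k")
    case True
    then obtain h v where y: "y = h # v" using assms(2) by (cases y) auto
    have "Ubar_adj k U (Ubar k U d) y =
        cnj (U False h) * (U False False * d (False # v) + U False True * d (True # v))
      + cnj (U True h) * (U True False * d (False # v) + U True True * d (True # v))"
      using True y by (simp add: Ubar_adj_def Ubar_apply algebra_simps)
    then show ?thesis using y orthonormal_columns_adj_mult[OF assms(1)] by simp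
  next
    case False
    then show ?thesis using assms(3) unfolding Hsp_def Ubar_adj_def by simp
  qed
qed

lemma Ubar_add: "Ubar k U (\<lambda>z. a z + b z) = (\<lambda>z. Ubar k U a z + Ubar k U b z)"
  unfolding Ubar_def basis_op_def by (simp add: sum.distrib distrib_right)

lemma Ubar_scale: "Ubar k U (\<lambda>z. s * a z) = (\<lambda>z. s * Ubar k U a z)"
  unfolding Ubar_def basis_op_def by (simp add: sum_distrib_left mult.assoc)

lemma Ubar_zero: "Ubar k U (\<lambda>_. 0) = (\<lambda>_. 0)"
  unfolding Ubar_def basis_op_def by simp

lemma Ubar_adj_add: "Ubar_adj k U (\<lambda>z. a z + b z) = (\<lambda>z. Ubar_adj k U a z + Ubar_adj k U b z)"
  unfolding Ubar_adj_def by (simp add: algebra_simps fun_eq_iff)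

lemma Ubar_adj_scale: "Ubar_adj k U (\<lambda>z. s * a z) = (\<lambda>z. s * Ubar_adj k U a z)"
  unfolding Ubar_adj_def by (simp add: algebra_simps fun_eq_iff)

lemma Ubar_adj_zero: "Ubar_adj k U (\<lambda>_. 0) = (\<lambda>_. 0)"
  unfolding Ubar_adj_def by (simp add: fun_eq_iff)

lemma cyl_proj_add: "cyl_proj w (\<lambda>z. a z + b z) = (\<lambda>z. cyl_proj w a z + cyl_proj w b z)"
  unfolding cyl_proj_def by auto

lemma cyl_proj_scale: "cyl_proj w (\<lambda>z. s * a z) = (\<lambda>z. s * cyl_proj w a z)"
  unfolding cyl_proj_def by auto

lemma cyl_proj_idem: "cyl_proj w (cyl_proj w a) = cyl_proj w a"
  unfolding cyl_proj_def by auto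

lemma cyl_proj_zero: "cyl_proj w (\<lambda>_. 0) = (\<lambda>_. 0)"
  unfolding cyl_proj_def by auto

lemma preimg_proj_add: "preimg_proj n x (\<lambda>z. a z + b z) = (\<lambda>z. preimg_proj n x a z + preimg_proj n x b z)"
  unfolding preimg_proj_apply by auto

lemma preimg_proj_scale: "preimg_proj n x (\<lambda>z. s * a z) = (\<lambda>z. s * preimg_proj n x a z)"
  unfolding preimg_proj_apply by auto

lemma swap_last2_add: "swap_last2 k (\<lambda>z. a z + b z) = (\<lambda>z. swap_last2 k a z + swap_last2 k b z)"
  unfolding swap_last2_def basis_op_def by (simp add: sum.distrib distrib_right)

lemma swap_last2_swap_last2:
  assumes "2 \<le> k" "a \<in> Hsp k"
  shows "swap_last2 k (swap_last2 k a) = a"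
proof
  fix z show "swap_last2 k (swap_last2 k a) z = a z"
  proof (cases "length z = k")
    case True
    then obtain v c d where "z = v @ [c, d]" using assms(1) obtain_snoc2 by metis
    then show ?thesis using True by (simp add: swap_last2_apply)
  next
    case False
    then show ?thesis using assms by (simp add: swap_last2_outside Hsp_def)
  qed
qed

context
  fixes k :: nat and U :: "bool \<Rightarrow> bool \<Rightarrow> complex"
  assumes k: "0 < k"
begin

lemma Pprime_add: "Pprime k U b (\<lambda>z. a z + c z) = (\<lambda>z. Pprime k U b a z + Pprime k U b c z)"
  unfolding Pprime_conv[OF k] by (simp add: Ubar_adj_add cyl_proj_add Ubar_add)

lemma Pprime_scale: "Pprime k U b (\<lambda>z. s * a z) = (\<lambda>z. s * Pprime k U b a z)"
  unfolding Pprime_conv[OF k] by (simp add: Ubar_adj_scale cyl_proj_scale Ubar_scale)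

lemma Pprime_zero: "Pprime k U b (\<lambda>_. 0) = (\<lambda>_. 0)"
  unfolding Pprime_conv[OF k] by (simp add: Ubar_adj_zero cyl_proj_zero Ubar_zero)

lemma Pprime_in_Hsp: "Pprime k U b a \<in> Hsp k"
  unfolding Pprime_conv[OF k] by (rule Ubar_in_Hsp)

lemma ip_Pprime: "ip k (Pprime k U b a) c = ip k a (Pprime k U b c)"
  unfolding Pprime_conv[OF k] by (simp add: ip_Ubar[OF k] ip_Ubar_adj[OF k] ip_cyl_proj)

lemma Pprime_Ubar:
  "orthonormal_columns U \<Longrightarrow> d \<in> Hsp k \<Longrightarrow> Pprime k U b (Ubar k U d) = Ubar k U (cyl_proj [b] d)"
  unfolding Pprime_conv[OF k] by (simp add: Ubar_adj_Ubar k)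

lemma Pprime_idem:
  assumes "orthonormal_columns U"
  shows "Pprime k U b (Pprime k U b \<eta>) = Pprime k U b \<eta>"
proof -
  have "Ubar_adj k U (Ubar k U (cyl_proj [b] (Ubar_adj k U \<eta>))) = cyl_proj [b] (Ubar_adj k U \<eta>)"
    by (intro Ubar_adj_Ubar assms k cyl_proj_in_Hsp Ubar_adj_in_Hsp)
  then show ?thesis unfolding Pprime_conv[OF k] by (simp add: cyl_proj_idem)
qed

end

lemma preimg_proj_cyl_proj:
  "preimg_proj (Suc n) x (cyl_proj [b] a) = cyl_proj [b] (preimg_proj (Suc n) x a)"
  by (auto simp: preimg_proj_apply cyl_proj_def fun_eq_iff)

lemma preimg_proj_swap_last2:
  assumes "n + length x + 2 \<le> k"
  shows "preimg_proj n x (swap_last2 k a) = swap_last2 k (preimg_proj n x a)"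
proof
  fix z show "preimg_proj n x (swap_last2 k a) z = swap_last2 k (preimg_proj n x a) z"
  proof (cases "length z = k")
    case True
    then obtain v c d where "z = v @ [c, d]" using assms obtain_snoc2 by (metis le_add2 order_trans)
    then show ?thesis using True assms by (simp add: swap_last2_apply preimg_proj_apply)
  next
    case False
    then show ?thesis using assms by (simp add: swap_last2_outside preimg_proj_apply)
  qed
qed

lemma preimg_proj_Ubar:
  assumes "n + length x < k"
  shows "preimg_proj n x (Ubar k U a) = Ubar k U (preimg_proj (Suc n) x a)"
proof
  fix z show "preimg_proj n x (Ubar k U a) z = Ubar k U (preimg_proj (Suc n) x a) z"
  proof (cases "length z = k")
    case True
    then obtain v d where "z = v @ [d]" using assms by (cases z rule: rev_cases) auto
    then show ?thesis using True assms by (simp add: Ubar_apply preimg_proj_apply)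
  next
    case False
    then show ?thesis by (simp add: Ubar_outside preimg_proj_apply)
  qed
qed

lemma preimg_proj_Pprime:
  assumes "n + length x < k"
  shows "preimg_proj n x (Pprime k U b c) = Pprime k U b (preimg_proj n x c)"
proof
  have k: "0 < k" using assms by simp
  fix z show "preimg_proj n x (Pprime k U b c) z = Pprime k U b (preimg_proj n x c) z"
  proof (cases "length z = k")
    case True
    then obtain v d where "z = v @ [d]" using assms by (cases z rule: rev_cases) auto
    then show ?thesis using True assms
      by (simp add: Pprime_conv[OF k] Ubar_apply preimg_proj_apply Ubar_adj_def cyl_proj_def)
  next
    case False
    then show ?thesis by (simp add: Pprime_conv[OF k] Ubar_outside preimg_proj_apply)
  qed
qed

text \<open>The letter moved to the end by the inner \<open>Ubar\<close> is swapped back into last place, so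
  \<open>Ubar_adj\<close> returns it to the front and undoes its \<open>U\<close>.\<close>

lemma Ubar_adj_swap_Ubar_Ubar_apply:
  assumes "orthonormal_columns U" "length v + 2 = k"
  shows "Ubar_adj k U (swap_last2 k (Ubar k U (Ubar k U f))) (h # v @ [c])
       = f (h # False # v) * U c False + f (h # True # v) * U c True"
proof -
  let ?p = "f (False # False # v) * U c False + f (False # True # v) * U c True"
  let ?q = "f (True # False # v) * U c False + f (True # True # v) * U c True"
  have "Ubar_adj k U (swap_last2 k (Ubar k U (Ubar k U f))) (h # v @ [c])
      = cnj (U False h) * (U False False * ?p + U False True * ?q)
      + cnj (U True h) * (U True False * ?p + U True True * ?q)"
    using assms(2) by (simp add: Ubar_adj_def swap_last2_apply Ubar_apply butlast_append algebra_simps)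
  then show ?thesis using orthonormal_columns_adj_mult[OF assms(1)] by (cases h) simp_all
qed

lemma Ubar_adj_Ubar_adj_swap_Ubar_apply:
  assumes "orthonormal_columns U" "length v + 2 = k"
  shows "Ubar_adj k U (Ubar_adj k U (swap_last2 k (Ubar k U g))) (h # l # v)
       = cnj (U False l) * g (h # v @ [False]) + cnj (U True l) * g (h # v @ [True])"
proof -
  let ?p = "cnj (U False l) * g (False # v @ [False]) + cnj (U True l) * g (False # v @ [True])"
  let ?q = "cnj (U False l) * g (True # v @ [False]) + cnj (U True l) * g (True # v @ [True])"
  have "Ubar_adj k U (Ubar_adj k U (swap_last2 k (Ubar k U g))) (h # l # v)
      = cnj (U False h) * (U False False * ?p + U False True * ?q)
      + cnj (U True h) * (U True False * ?p + U True True * ?q)"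
    using assms(2) by (simp add: Ubar_adj_def swap_last2_apply Ubar_apply butlast_append algebra_simps)
  then show ?thesis using orthonormal_columns_adj_mult[OF assms(1)] by (cases h) simp_all
qed

lemma cyl_proj_Ubar_adj_swap_Ubar_Pprime:
  assumes "orthonormal_columns U" "2 \<le> k"
  shows "cyl_proj [False] (Ubar_adj k U (swap_last2 k (Ubar k U (Pprime k U True c)))) = (\<lambda>_. 0)"
proof
  fix y
  show "cyl_proj [False] (Ubar_adj k U (swap_last2 k (Ubar k U (Pprime k U True c)))) y = 0"
  proof (cases "length y = k")
    case True
    then obtain h r where y: "y = h # r" using assms(2) by (cases y) auto
    then have "r \<noteq> []" using True assms(2) by auto
    then obtain v e where "r = v @ [e]" by (cases r rule: rev_cases) auto
    with y True show ?thesis using assms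
      by (cases h) (simp_all add: cyl_proj_def Pprime_conv Ubar_adj_swap_Ubar_Ubar_apply)
  next
    case False
    then show ?thesis by (simp add: cyl_proj_def Ubar_adj_def)
  qed
qed

lemma Pprime_Ubar_adj_swap_Ubar_cyl_proj:
  assumes "orthonormal_columns U" "2 \<le> k"
  shows "Pprime k U True (Ubar_adj k U (swap_last2 k (Ubar k U (cyl_proj [False] c)))) = (\<lambda>_. 0)"
proof -
  have "cyl_proj [True] (Ubar_adj k U (Ubar_adj k U (swap_last2 k (Ubar k U (cyl_proj [False] c))))) = (\<lambda>_. 0)"
  proof
    fix y
    show "cyl_proj [True] (Ubar_adj k U (Ubar_adj k U (swap_last2 k (Ubar k U (cyl_proj [False] c))))) y = 0"
    proof (cases "length y = k")
    case True
      then obtain h l v where "y = h # l # v" using assms(2)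
        by (metis Suc_le_length_iff numeral_2_eq_2)
      with True show ?thesis using assms
        by (cases h) (simp_all add: cyl_proj_def Ubar_adj_Ubar_adj_swap_Ubar_apply)
    next
      case False
      then show ?thesis by (simp add: cyl_proj_def Ubar_adj_def)
    qed
  qed
  then show ?thesis using assms(2) by (simp add: Pprime_conv Ubar_zero)
qed

definition Util_adj :: "nat \<Rightarrow> (bool \<Rightarrow> bool \<Rightarrow> complex) \<Rightarrow> real \<Rightarrow> tvec \<Rightarrow> tvec" where
  "Util_adj k U \<theta> = (\<lambda>(\<xi>0, \<xi>1).
     (\<lambda>z. cyl_proj [False] (Ubar_adj k U \<xi>0) z + cnj (exp (\<i> * complex_of_real \<theta>)) * cyl_proj [True] (Ubar_adj k U \<xi>1) z,
      Pprime k U True (Ubar_adj k U (swap_last2 k \<xi>0))))"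

lemma ipT_Util:
  assumes "2 \<le> k"
  shows "ipT k (Util k U \<theta> \<phi>) \<xi> = ipT k \<phi> (Util_adj k U \<theta> \<xi>)"
proof -
  have k: "0 < k" using assms by simp
  obtain \<phi>0 \<phi>1 \<xi>0 \<xi>1 where "\<phi> = (\<phi>0, \<phi>1)" "\<xi> = (\<xi>0, \<xi>1)" by fastforce
  then show ?thesis
    by (simp add: ipT_def Util_def Util_adj_def ip_add_left ip_add_right ip_scale_left ip_scale_right
        ip_swap_last2[OF assms] ip_Ubar[OF k] ip_cyl_proj ip_Pprime[OF k])
qed

lemma Util_adj_in_Htil: "Util_adj k U \<theta> \<xi> \<in> Htil k U"
  by (auto simp: Util_adj_def Htil_def Hsp_def cyl_proj_def Ubar_adj_def split: prod.split
      intro!: imageI Ubar_adj_in_Hsp)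

lemma Htil_eqI:
  assumes "orthonormal_columns U" "0 < k" "\<chi> \<in> Htil k U" "\<chi>' \<in> Htil k U"
    and "\<And>\<phi>. \<phi> \<in> Htil k U \<Longrightarrow> ipT k \<phi> \<chi> = ipT k \<phi> \<chi>'"
  shows "\<chi> = \<chi>'"
proof -
  obtain a \<eta> where \<chi>: "\<chi> = (a, Pprime k U True \<eta>)" "a \<in> Hsp k"
    using assms(3) unfolding Htil_def by auto
  obtain b \<eta>' where \<chi>': "\<chi>' = (b, Pprime k U True \<eta>')" "b \<in> Hsp k"
    using assms(4) unfolding Htil_def by auto
  have zero: "(\<lambda>_. 0) \<in> Hsp k" unfolding Hsp_def by simp
  have "a = b"
  proof (rule Hsp_eqI)
    fix \<phi> assume "\<phi> \<in> Hsp k"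
    then have "(\<phi>, Pprime k U True (\<lambda>_. 0)) \<in> Htil k U" using zero unfolding Htil_def by blast
    then show "ip k \<phi> a = ip k \<phi> b"
      using assms(5) \<chi> \<chi>' by (force simp: ipT_def Pprime_zero[OF assms(2)] ip_zero_left)
  qed (use \<chi> \<chi>' in auto)
  moreover have "Pprime k U True \<eta> = Pprime k U True \<eta>'"
  proof (rule Hsp_eqI)
    fix \<phi> assume "\<phi> \<in> Hsp k"
    then have "((\<lambda>_. 0), Pprime k U True \<phi>) \<in> Htil k U" using zero unfolding Htil_def by blast
    then show "ip k \<phi> (Pprime k U True \<eta>) = ip k \<phi> (Pprime k U True \<eta>')"
      using assms(5) \<chi> \<chi>'
      by (force simp: ipT_def ip_zero_left ip_Pprime[OF assms(2)] Pprime_idem[OF assms(2,1)])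
  qed (simp_all add: Pprime_in_Hsp assms(2))
  ultimately show ?thesis using \<chi> \<chi>' by simp
qed

lemma adjT_Util:
  assumes "orthonormal_columns U" "2 \<le> k"
  shows "adjT k U (Util k U \<theta>) \<xi> = Util_adj k U \<theta> \<xi>"
  unfolding adjT_def
proof (rule the_equality)
  show "Util_adj k U \<theta> \<xi> \<in> Htil k U \<and> (\<forall>\<phi>\<in>Htil k U. ipT k (Util k U \<theta> \<phi>) \<xi> = ipT k \<phi> (Util_adj k U \<theta> \<xi>))"
    using Util_adj_in_Htil ipT_Util[OF assms(2)] by blast
  fix \<chi> assume \<chi>: "\<chi> \<in> Htil k U \<and> (\<forall>\<phi>\<in>Htil k U. ipT k (Util k U \<theta> \<phi>) \<xi> = ipT k \<phi> \<chi>)"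
  have "0 < k" using assms(2) by simp
  from Htil_eqI[OF assms(1) this] show "\<chi> = Util_adj k U \<theta> \<xi>"
    using \<chi> by (auto simp: Util_adj_in_Htil ipT_Util[OF assms(2)])
qed

lemma cnj_exp_i_mult_exp_i: "cnj (exp (\<i> * complex_of_real \<theta>)) * exp (\<i> * complex_of_real \<theta>) = 1"
  using complex_norm_square[of "exp (\<i> * complex_of_real \<theta>)"] by (simp add: mult.commute)

lemma Util_adj_Ptil_Util:
  assumes "orthonormal_columns U" "n + length x + 2 \<le> k" "\<psi> \<in> Htil k U"
  shows "Util_adj k U \<theta> (Ptil k U n x (Util k U \<theta> \<psi>)) = Ptil k U (Suc n) x \<psi>"
proof -
  have k2: "2 \<le> k" and k: "0 < k" using assms(2) by auto
  obtain \<phi>0 \<phi>1 where \<psi>: "\<psi> = (\<phi>0, \<phi>1)" and \<phi>0: "\<phi>0 \<in> Hsp k"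
    using assms(3) unfolding Htil_def by auto
  let ?e = "exp (\<i> * complex_of_real \<theta>)"
  let ?Q = "preimg_proj n x" and ?Q' = "preimg_proj (Suc n) x"
  let ?P' = "Pprime k U True"
  have Q'\<phi>0: "?Q' \<phi>0 \<in> Hsp k" using \<phi>0 by (rule preimg_proj_in_Hsp)
  have Q_V0: "?Q (\<lambda>z. swap_last2 k (Ubar k U (?P' \<phi>1)) z + Ubar k U (cyl_proj [False] \<phi>0) z)
      = (\<lambda>z. swap_last2 k (Ubar k U (?P' (?Q' \<phi>1))) z + Ubar k U (cyl_proj [False] (?Q' \<phi>0)) z)"
    using assms(2) by (simp add: preimg_proj_add preimg_proj_swap_last2 preimg_proj_Ubar
        preimg_proj_Pprime preimg_proj_cyl_proj)
  have Q_V1: "?Q (\<lambda>z. ?e * Ubar k U (cyl_proj [True] \<phi>0) z) = (\<lambda>z. ?e * Ubar k U (cyl_proj [True] (?Q' \<phi>0)) z)"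
    using assms(2) by (simp add: preimg_proj_scale preimg_proj_Ubar preimg_proj_cyl_proj)
  have fst0: "cyl_proj [False] (Ubar_adj k U (?Q (\<lambda>z. swap_last2 k (Ubar k U (?P' \<phi>1)) z
      + Ubar k U (cyl_proj [False] \<phi>0) z))) = cyl_proj [False] (?Q' \<phi>0)"
    unfolding Q_V0 Ubar_adj_add cyl_proj_add cyl_proj_Ubar_adj_swap_Ubar_Pprime[OF assms(1) k2]
      Ubar_adj_Ubar[OF assms(1) k cyl_proj_in_Hsp[OF Q'\<phi>0]]
    by (simp add: cyl_proj_idem)
  have fst1: "cyl_proj [True] (Ubar_adj k U (?P' (?Q (\<lambda>z. ?e * Ubar k U (cyl_proj [True] \<phi>0) z))))
      = (\<lambda>z. ?e * cyl_proj [True] (?Q' \<phi>0) z)"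
    unfolding Q_V1 Pprime_scale[OF k] Pprime_Ubar[OF k assms(1) cyl_proj_in_Hsp[OF Q'\<phi>0]] Ubar_adj_scale
      Ubar_adj_Ubar[OF assms(1) k cyl_proj_in_Hsp[OF cyl_proj_in_Hsp[OF Q'\<phi>0]]] cyl_proj_scale
    by (simp add: cyl_proj_idem)
  have snd: "?P' (Ubar_adj k U (swap_last2 k (?Q (\<lambda>z. swap_last2 k (Ubar k U (?P' \<phi>1)) z
      + Ubar k U (cyl_proj [False] \<phi>0) z)))) = ?P' (?Q' \<phi>1)"
    unfolding Q_V0 swap_last2_add swap_last2_swap_last2[OF k2 Ubar_in_Hsp] Ubar_adj_add
      Ubar_adj_Ubar[OF assms(1) k Pprime_in_Hsp[OF k]] Pprime_add[OF k] Pprime_idem[OF k assms(1)]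
      Pprime_Ubar_adj_swap_Ubar_cyl_proj[OF assms(1) k2]
    by simp
  have "(\<lambda>z. cyl_proj [False] (?Q' \<phi>0) z + cnj ?e * (?e * cyl_proj [True] (?Q' \<phi>0) z)) = ?Q' \<phi>0"
  proof
    fix z show "cyl_proj [False] (?Q' \<phi>0) z + cnj ?e * (?e * cyl_proj [True] (?Q' \<phi>0) z) = ?Q' \<phi>0 z"
      using cnj_exp_i_mult_exp_i[of \<theta>] unfolding mult.assoc[symmetric]
      by (cases z) (auto simp: cyl_proj_def preimg_proj_apply)
  qed
  then show ?thesis
    using fst0 fst1 snd by (simp add: \<psi> Util_def Ptil_def Util_adj_def)
qed

theorem corollary2:
  fixes k :: nat and U :: "bool \<Rightarrow> bool \<Rightarrow> complex" and \<theta> :: real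
    and x :: "bool list" and n :: nat
  assumes "k \<ge> 3"
    and "\<forall>i j. cmod (U i j) = 1 / sqrt 2"
    and "\<forall>i l. (\<Sum>j\<in>UNIV. cnj (U j i) * U j l) = (if i = l then 1 else 0)"
    and "n + length x < k - 1"
  shows "\<forall>\<psi>\<in>Htil k U. adjT k U (Util k U \<theta>) (Ptil k U n x (Util k U \<theta> \<psi>)) = Ptil k U (Suc n) x \<psi>"
\<comment> \<open>Neither \<open>k \<ge> 3\<close> nor the modulus condition on the entries of \<open>U\<close> is needed.\<close>
proof
  fix \<psi> assume \<psi>: "\<psi> \<in> Htil k U"
  have U: "orthonormal_columns U"
    using assms(3) by (simp add: orthonormal_columns_def UNIV_bool add.commute)
  have nx: "n + length x + 2 \<le> k" using assms(4) by simp
  then have "2 \<le> k" by simp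
  then show "adjT k U (Util k U \<theta>) (Ptil k U n x (Util k U \<theta> \<psi>)) = Ptil k U (Suc n) x \<psi>"
    using adjT_Util[OF U] Util_adj_Ptil_Util[OF U nx \<psi>] by simp
qed

end
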